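(* Let $Y$ be a non-negative random variable. Let $p:[t_{1}, \infty) \to [0, \infty)$ be a non-decreasing function such that $0 < p(2t) \leq b\, p(t)$ for all $t \geq t_{1}$ and $\lim_{t \to \infty} p(t) \mathbb{P}(Y > t) = 0$, where $b > 1$ and $t_{1} > 0$ are constants. Let $h:[t_{2}, \infty) \to [0, \infty)$ be a non-decreasing function with $\lim_{t \to \infty} h(t) = \infty$ and $\lim_{t \to \infty} h(t+1)/h(t) = 1$, where $t_{2} > 0$ is a constant. Then \[ \limsup_{n \to \infty} \frac{\log (p(n) \mathbb{P}(Y > n))}{h(n)} = \limsup_{t \to \infty} \frac{\log (p(t) \mathbb{P}(Y > t))}{h(t)} \quad\text{and}\quad \liminf_{n \to \infty} \frac{\log (p(n) \mathbb{P}(Y > n))}{h(n)} = \liminf_{t \to \infty} \frac{\log (p(t) \mathbb{P}(Y > t))}{h(t)}, \] where $n$ ranges over integers and $t$ over reals.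
   Context: $\log$ is the natural logarithm with $\log 0=-\infty$. *)

theory Defs
  imports "HOL-Probability.Probability"
begin

definition elog :: "real \<Rightarrow> ereal" where
  "elog x = (if x = 0 then -\<infinity> else ereal (ln x))"

end

theory Submission
  imports Defs
begin

(* Write F t = p t * P(Y > t). For n \<le> t \<le> n + 1, monotonicity of p and of the tail together
  with the doubling bound give F t \<le> b F n and F (n + 1) \<le> b F t. Once F \<le> 1 the logarithms
  are non-positive, and since h t lies between h n and h (n + 1) this yields
    log F t / h t \<le> ln b / h n + (h n / h (n + 1)) * (log F n / h n)
  and the mirror lower bound in terms of log F (n + 1) / h (n + 1). As h \<rightarrow> \<infinity> and
  h (n + 1) / h n \<rightarrow> 1, the error terms do not affect lim sup and lim inf. *)

lemma Limsup_compose_le: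
  assumes "filterlim f F' F"
  shows "Limsup F (\<lambda>x. g (f x)) \<le> Limsup F' g"
proof -
  have "Limsup F (\<lambda>x. g (f x)) \<le> Limsup (filtermap f F) g"
    by (rule Limsup_filtermap_ge)
  also have "\<dots> \<le> Limsup F' g"
    using assms unfolding filterlim_def Limsup_def le_filter_def
    by (auto intro!: INF_superset_mono)
  finally show ?thesis .
qed

lemma Liminf_compose_ge:
  assumes "filterlim f F' F"
  shows "Liminf F' g \<le> Liminf F (\<lambda>x. g (f x))"
proof -
  have "Liminf F' g \<le> Liminf (filtermap f F) g"
    using assms unfolding filterlim_def Liminf_def le_filter_def
    by (auto intro!: SUP_subset_mono)
  also have "\<dots> \<le> Liminf F (\<lambda>x. g (f x))"
    by (rule Liminf_filtermap_le)
  finally show ?thesis .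
qed

lemma elog_div_le:
  fixes x y b h\<^sub>0 h h\<^sub>1 :: real
  assumes "1 \<le> b" "0 < h\<^sub>0" "h\<^sub>0 \<le> h" "h \<le> h\<^sub>1" "0 \<le> x" "x \<le> b * y" "y \<le> 1"
  shows "elog x / ereal h \<le> ereal (ln b / h\<^sub>0) + ereal (h\<^sub>0 / h\<^sub>1) * (elog y / ereal h\<^sub>0)"
proof (cases "x = 0")
  case True
  then show ?thesis using assms by (simp add: elog_def)
next
  case False
  with assms have "0 < x" by simp
  with assms have "0 < b * y" by linarith
  with assms have "0 < y" by (simp add: zero_less_mult_iff)
  have "ln x \<le> ln (b * y)"
    using assms \<open>0 < x\<close> by simp
  also have "\<dots> = ln b + ln y"
    using assms \<open>0 < y\<close> by (simp add: ln_mult)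
  finally have "ln x \<le> ln b + ln y" .
  moreover have "ln b / h \<le> ln b / h\<^sub>0"
    using assms by (intro divide_left_mono) auto
  moreover have "ln y / h \<le> ln y / h\<^sub>1"
    using assms \<open>0 < y\<close> by (intro divide_left_mono_neg) auto
  ultimately have "ln x / h \<le> ln b / h\<^sub>0 + ln y / h\<^sub>1"
    using assms by (smt (verit) add_divide_distrib divide_right_mono)
  then show ?thesis
    using assms False \<open>0 < y\<close> by (simp add: elog_def)
qed

lemma elog_div_ge:
  fixes x y b h\<^sub>0 h h\<^sub>1 :: real
  assumes "1 \<le> b" "0 < h\<^sub>0" "h\<^sub>0 \<le> h" "h \<le> h\<^sub>1" "0 \<le> y" "y \<le> b * x" "y \<le> 1"
  shows "ereal (- ln b / h\<^sub>0) + ereal (h\<^sub>1 / h\<^sub>0) * (elog y / ereal h\<^sub>1) \<le> elog x / ereal h"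
proof (cases "y = 0")
  case True
  then show ?thesis using assms by (simp add: elog_def)
next
  case False
  with assms have "0 < y" by simp
  with assms have "0 < b * x" by linarith
  with assms have "0 < x" by (simp add: zero_less_mult_iff)
  have "ln y \<le> ln (b * x)"
    using assms \<open>0 < y\<close> by simp
  also have "\<dots> = ln b + ln x"
    using assms \<open>0 < x\<close> by (simp add: ln_mult)
  finally have "ln y - ln b \<le> ln x" by simp
  moreover have "ln b / h \<le> ln b / h\<^sub>0"
    using assms by (intro divide_left_mono) auto
  moreover have "ln y / h\<^sub>0 \<le> ln y / h"
    using assms \<open>0 < y\<close> by (intro divide_left_mono_neg) auto
  ultimately have "- ln b / h\<^sub>0 + ln y / h\<^sub>0 \<le> ln x / h"
    using assms by (smt (verit) diff_divide_distrib divide_right_mono)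
  then show ?thesis
    using assms False \<open>0 < x\<close> by (simp add: elog_def)
qed

lemma filterlim_nat_floor_sequentially: "filterlim (\<lambda>t. nat \<lfloor>t\<rfloor>) sequentially at_top"
  by (rule filterlim_compose[OF filterlim_nat_sequentially filterlim_floor_sequentially])

definition log_rate :: "(real \<Rightarrow> real) \<Rightarrow> (real \<Rightarrow> real) \<Rightarrow> real \<Rightarrow> ereal" where
  "log_rate F h t = elog (F t) / ereal (h t)"

locale unit_step_regular =
  fixes F h :: "real \<Rightarrow> real" and b T :: real
  assumes b_ge_1: "1 \<le> b"
    and F_nonneg: "\<And>t. T \<le> t \<Longrightarrow> 0 \<le> F t"
    and F_step: "\<And>n t. T \<le> n \<Longrightarrow> n \<le> t \<Longrightarrow> t \<le> n + 1 \<Longrightarrow> F t \<le> b * F n \<and> F (n + 1) \<le> b * F t"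
    and F_tendsto_0: "(F \<longlongrightarrow> 0) at_top"
    and h_mono: "mono_on {T..} h"
    and h_at_top: "filterlim h at_top at_top"
    and h_step_ratio: "((\<lambda>t. h (t + 1) / h t) \<longlongrightarrow> 1) at_top"
begin

lemma log_rate_le_left_endpoint:
  assumes "T \<le> n" "n \<le> t" "t \<le> n + 1" "0 < h n" "F n \<le> 1"
  shows "log_rate F h t \<le> ereal (ln b / h n) + ereal (h n / h (n + 1)) * log_rate F h n"
  unfolding log_rate_def
proof (rule elog_div_le)
  show "h n \<le> h t" "h t \<le> h (n + 1)"
    using assms by (auto intro: mono_onD[OF h_mono])
qed (use assms b_ge_1 F_nonneg F_step in auto)

lemma log_rate_ge_right_endpoint:
  assumes "T \<le> n" "n \<le> t" "t \<le> n + 1" "0 < h n" "F (n + 1) \<le> 1"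
  shows "ereal (- ln b / h n) + ereal (h (n + 1) / h n) * log_rate F h (n + 1) \<le> log_rate F h t"
  unfolding log_rate_def
proof (rule elog_div_ge)
  show "h n \<le> h t" "h t \<le> h (n + 1)"
    using assms by (auto intro: mono_onD[OF h_mono])
qed (use assms b_ge_1 F_nonneg F_step in auto)

lemma eventually_floor_bounds:
  "\<forall>\<^sub>F t in at_top. T \<le> real (nat \<lfloor>t\<rfloor>) \<and> real (nat \<lfloor>t\<rfloor>) \<le> t \<and> t \<le> real (nat \<lfloor>t\<rfloor>) + 1
     \<and> 0 < h (real (nat \<lfloor>t\<rfloor>)) \<and> F (real (nat \<lfloor>t\<rfloor>)) \<le> 1 \<and> F (real (nat \<lfloor>t\<rfloor>) + 1) \<le> 1"
proof -
  have "\<forall>\<^sub>F t in at_top. T \<le> t \<and> 0 < h t \<and> F t \<le> 1"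
    using eventually_ge_at_top[of T] filterlim_at_top_dense[THEN iffD1, OF h_at_top, rule_format, of 0]
      order_tendstoD(2)[OF F_tendsto_0 zero_less_one]
    by eventually_elim auto
  then obtain T\<^sub>0 where T\<^sub>0: "\<And>t. T\<^sub>0 \<le> t \<Longrightarrow> T \<le> t \<and> 0 < h t \<and> F t \<le> 1"
    unfolding eventually_at_top_linorder by blast
  show ?thesis
  proof (rule eventually_mono[OF eventually_ge_at_top[of "max T\<^sub>0 0 + 1"]])
    fix t assume "max T\<^sub>0 0 + 1 \<le> t"
    then have "T\<^sub>0 \<le> real (nat \<lfloor>t\<rfloor>)" "real (nat \<lfloor>t\<rfloor>) \<le> t" "t \<le> real (nat \<lfloor>t\<rfloor>) + 1"
      by linarith+
    then show "T \<le> real (nat \<lfloor>t\<rfloor>) \<and> real (nat \<lfloor>t\<rfloor>) \<le> t \<and> t \<le> real (nat \<lfloor>t\<rfloor>) + 1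
     \<and> 0 < h (real (nat \<lfloor>t\<rfloor>)) \<and> F (real (nat \<lfloor>t\<rfloor>)) \<le> 1 \<and> F (real (nat \<lfloor>t\<rfloor>) + 1) \<le> 1"
      using T\<^sub>0[of "real (nat \<lfloor>t\<rfloor>)"] T\<^sub>0[of "real (nat \<lfloor>t\<rfloor>) + 1"] by auto
  qed
qed

lemma h_sequentially: "filterlim (\<lambda>n. h (real n)) at_top sequentially"
  by (rule filterlim_compose[OF h_at_top filterlim_real_sequentially])

lemma const_div_h_sequentially: "(\<lambda>n. ereal (c / h (real n))) \<longlonglongrightarrow> 0"
  using tendsto_divide_0[OF tendsto_const filterlim_at_top_imp_at_infinity[OF h_sequentially]]
  by (simp add: zero_ereal_def)

lemma h_step_ratio_sequentially: "(\<lambda>n. ereal (h (real n + 1) / h (real n))) \<longlonglongrightarrow> 1"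
  using filterlim_compose[OF h_step_ratio filterlim_real_sequentially]
  by (simp add: one_ereal_def)

lemma h_step_ratio_inverse_sequentially: "(\<lambda>n. ereal (h (real n) / h (real n + 1))) \<longlonglongrightarrow> 1"
  using tendsto_inverse[OF filterlim_compose[OF h_step_ratio filterlim_real_sequentially]]
  by (simp add: one_ereal_def)

lemma Limsup_log_rate: "limsup (\<lambda>n. log_rate F h (real n)) = Limsup at_top (log_rate F h)"
proof (rule antisym)
  show "limsup (\<lambda>n. log_rate F h (real n)) \<le> Limsup at_top (log_rate F h)"
    by (rule Limsup_compose_le[OF filterlim_real_sequentially])
  define u where "u n = ereal (ln b / h (real n)) + ereal (h (real n) / h (real n + 1)) * log_rate F h (real n)" for n
  have "\<forall>\<^sub>F t in at_top. log_rate F h t \<le> u (nat \<lfloor>t\<rfloor>)"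
    using eventually_floor_bounds
    by eventually_elim (unfold u_def, intro log_rate_le_left_endpoint, auto)
  then have "Limsup at_top (log_rate F h) \<le> Limsup at_top (\<lambda>t::real. u (nat \<lfloor>t\<rfloor>))"
    by (rule Limsup_mono)
  also have "\<dots> \<le> limsup u"
    by (rule Limsup_compose_le[OF filterlim_nat_floor_sequentially])
  also have "\<dots> = limsup (\<lambda>n. log_rate F h (real n))"
    unfolding u_def
    using ereal_limsup_lim_add[OF const_div_h_sequentially[of "ln b"]]
      ereal_limsup_lim_mult[OF h_step_ratio_inverse_sequentially]
    by simp
  finally show "Limsup at_top (log_rate F h) \<le> limsup (\<lambda>n. log_rate F h (real n))" .
qed

lemma Liminf_log_rate: "liminf (\<lambda>n. log_rate F h (real n)) = Liminf at_top (log_rate F h)"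
proof (rule antisym)
  define l where "l n = ereal (- ln b / h (real n)) + ereal (h (real n + 1) / h (real n)) * log_rate F h (real n + 1)" for n
  have "liminf (\<lambda>n. log_rate F h (real n)) = liminf (\<lambda>n. log_rate F h (real n + 1))"
    using liminf_shift[of "\<lambda>n. log_rate F h (real n)"] by (simp add: add.commute)
  also have "\<dots> = liminf l"
    unfolding l_def
    using ereal_liminf_lim_add[OF const_div_h_sequentially[of "- ln b"]]
      ereal_liminf_lim_mult[OF h_step_ratio_sequentially]
    by simp
  also have "\<dots> \<le> Liminf at_top (\<lambda>t::real. l (nat \<lfloor>t\<rfloor>))"
    by (rule Liminf_compose_ge[OF filterlim_nat_floor_sequentially])
  also have "\<dots> \<le> Liminf at_top (log_rate F h)"
  proof (rule Liminf_mono)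
    show "\<forall>\<^sub>F t in at_top. l (nat \<lfloor>t\<rfloor>) \<le> log_rate F h t"
      using eventually_floor_bounds
      by eventually_elim (unfold l_def, intro log_rate_ge_right_endpoint, auto)
  qed
  finally show "liminf (\<lambda>n. log_rate F h (real n)) \<le> Liminf at_top (log_rate F h)" .
  show "Liminf at_top (log_rate F h) \<le> liminf (\<lambda>n. log_rate F h (real n))"
    by (rule Liminf_compose_ge[OF filterlim_real_sequentially])
qed

end

lemma (in finite_measure) measure_greater_antimono:
  fixes Y :: "'a \<Rightarrow> real"
  assumes "Y \<in> borel_measurable M" "t \<le> s"
  shows "measure M {x \<in> space M. s < Y x} \<le> measure M {x \<in> space M. t < Y x}"
proof (rule finite_measure_mono)
  show "{x \<in> space M. s < Y x} \<subseteq> {x \<in> space M. t < Y x}"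
    using assms(2) by auto
  show "{x \<in> space M. t < Y x} \<in> sets M"
    using assms(1) by measurable
qed

lemma doubling_mono_mult_le:
  fixes p :: "real \<Rightarrow> real"
  assumes "mono_on {t\<^sub>0..} p" "\<forall>t\<ge>t\<^sub>0. 0 \<le> p t" "\<forall>t\<ge>t\<^sub>0. p (2 * t) \<le> b * p t"
    and "t\<^sub>0 \<le> u" "u \<le> v" "v \<le> 2 * u" "0 \<le> r" "r \<le> s"
  shows "p v * r \<le> b * (p u * s)"
proof -
  have "p v \<le> p (2 * u)"
    using assms by (intro mono_onD[OF assms(1)]) auto
  also have "\<dots> \<le> b * p u"
    using assms by auto
  finally have "p v * r \<le> (b * p u) * s"
    using assms by (intro mult_mono) (auto intro: order_trans[of 0 "p v"])
  then show ?thesis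
    by (simp add: mult.assoc)
qed

theorem lemma3p2:
  fixes M :: "'a measure" and Y :: "'a \<Rightarrow> real"
    and p h :: "real \<Rightarrow> real" and b t1 t2 :: real
  assumes "prob_space M"
    and "Y \<in> borel_measurable M"
    and "\<forall>x\<in>space M. Y x \<ge> 0"
    and "b > 1" and "t1 > 0" and "t2 > 0"
    and "mono_on {t1..} p"
    and "\<forall>t\<ge>t1. p t \<ge> 0"
    and "\<forall>t\<ge>t1. 0 < p (2 * t) \<and> p (2 * t) \<le> b * p t"
    and "((\<lambda>t. p t * measure M {x\<in>space M. Y x > t}) \<longlongrightarrow> 0) at_top"
    and "mono_on {t2..} h"
    and "\<forall>t\<ge>t2. h t \<ge> 0"
    and "filterlim h at_top at_top"
    and "((\<lambda>t. h (t + 1) / h t) \<longlongrightarrow> 1) at_top"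
  shows "limsup (\<lambda>n::nat. elog (p (real n) * measure M {x\<in>space M. Y x > real n}) / ereal (h (real n)))
         = Limsup at_top (\<lambda>t::real. elog (p t * measure M {x\<in>space M. Y x > t}) / ereal (h t))
     \<and> liminf (\<lambda>n::nat. elog (p (real n) * measure M {x\<in>space M. Y x > real n}) / ereal (h (real n)))
         = Liminf at_top (\<lambda>t::real. elog (p t * measure M {x\<in>space M. Y x > t}) / ereal (h t))"
proof -
  interpret prob_space M by fact
  define P where "P t = measure M {x \<in> space M. Y x > t}" for t
  define T where "T = max 1 (max t1 t2)"
  have step: "p v * P v \<le> b * (p u * P u)" if "T \<le> u" "u \<le> v" "v \<le> 2 * u" for u v
    using that assms(7-9) unfolding P_def T_def
    by (intro doubling_mono_mult_le measure_greater_antimono[OF assms(2)]) auto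
  interpret unit_step_regular "\<lambda>t. p t * P t" h b T
  proof
    show "0 \<le> p t * P t" if "T \<le> t" for t
      using that assms(8) unfolding P_def T_def by simp
    show "p t * P t \<le> b * (p n * P n) \<and> p (n + 1) * P (n + 1) \<le> b * (p t * P t)"
      if "T \<le> n" "n \<le> t" "t \<le> n + 1" for n t
      using that step[of n t] step[of t "n + 1"] unfolding T_def by auto
    show "mono_on {T..} h"
      using assms(11) unfolding T_def by (rule mono_on_subset) auto
  qed (use assms(4,10,13,14) in \<open>auto simp: P_def\<close>)
  show ?thesis
    using Limsup_log_rate Liminf_log_rate unfolding log_rate_def P_def by simp
qed

end
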